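(* Let $P$ be a bounded complete dcpo. If $\Sigma P\times\Sigma P$ is a Fréchet space, then $\Sigma P$ is sober.
   Context: A dcpo is a poset in which every directed subset has a supremum; it is bounded complete if every subset having an upper bound has a supremum. $\Sigma P$ denotes $P$ with the Scott topology (a set $U$ is Scott open iff $U$ is an upper set and for every directed $D$, $\bigvee D\in U$ implies $D\cap U\neq\emptyset$). A topological space is Fréchet if whenever $x$ lies in the closure of a set $A$, some sequence in $A$ converges to $x$. A $T_0$ space is sober if every irreducible closed set equals $\overline{\{x\}}$ for some point $x$. *)

theory Defs
  imports "HOL-Analysis.Analysis"
begin

text \<open>The poset P is the whole type 'a with its partial order.\<close>

definition is_sup :: "'a::order set \<Rightarrow> 'a \<Rightarrow> bool" where
  "is_sup A s \<longleftrightarrow> (\<forall>a\<in>A. a \<le> s) \<and> (\<forall>u. (\<forall>a\<in>A. a \<le> u) \<longrightarrow> s \<le> u)"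

definition directed :: "'a::order set \<Rightarrow> bool" where
  "directed D \<longleftrightarrow> D \<noteq> {} \<and> (\<forall>x\<in>D. \<forall>y\<in>D. \<exists>z\<in>D. x \<le> z \<and> y \<le> z)"

definition dcpo :: "'a::order itself \<Rightarrow> bool" where
  "dcpo _ \<longleftrightarrow> (\<forall>D::'a set. directed D \<longrightarrow> (\<exists>s. is_sup D s))"

definition bounded_complete :: "'a::order itself \<Rightarrow> bool" where
  "bounded_complete _ \<longleftrightarrow> (\<forall>A::'a set. (\<exists>u. \<forall>a\<in>A. a \<le> u) \<longrightarrow> (\<exists>s. is_sup A s))"

definition scott_open :: "'a::order set \<Rightarrow> bool" where
  "scott_open U \<longleftrightarrow> (\<forall>x y. x \<in> U \<and> x \<le> y \<longrightarrow> y \<in> U) \<and>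
     (\<forall>D s. directed D \<and> is_sup D s \<and> s \<in> U \<longrightarrow> D \<inter> U \<noteq> {})"

definition scott_topology :: "'a::order topology" where
  "scott_topology = topology scott_open"

definition frechet_space :: "'a topology \<Rightarrow> bool" where
  "frechet_space X \<longleftrightarrow> (\<forall>A x. A \<subseteq> topspace X \<and> x \<in> X closure_of A \<longrightarrow>
     (\<exists>\<sigma>::nat \<Rightarrow> 'a. (\<forall>n. \<sigma> n \<in> A) \<and> limitin X \<sigma> x sequentially))"

definition irreducible_in :: "'a topology \<Rightarrow> 'a set \<Rightarrow> bool" where
  "irreducible_in X C \<longleftrightarrow> C \<noteq> {} \<and> C \<subseteq> topspace X \<and>
     (\<forall>F1 F2. closedin X F1 \<and> closedin X F2 \<and> C \<subseteq> F1 \<union> F2 \<longrightarrow> C \<subseteq> F1 \<or> C \<subseteq> F2)"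

definition sober_space :: "'a topology \<Rightarrow> bool" where
  "sober_space X \<longleftrightarrow> t0_space X \<and>
     (\<forall>C. closedin X C \<and> irreducible_in X C \<longrightarrow> (\<exists>x\<in>topspace X. C = X closure_of {x}))"

end

theory Submission
  imports Defs
begin

(* An irreducible Scott-closed set C is the closure of a point as soon as it is directed:
   its supremum s then lies in C, and C is the down-set of s, which is the closure of {s}.
   Suppose a, b \<in> C have no common upper bound in C. By bounded completeness, the elements
   incompatible (in C) with a fixed u form a Scott-open set. Irreducibility puts (a, b) in the
   closure of the diagonal of C, so the Frechet property gives a sequence c in C converging to
   both a and b. Convergence to a makes the set of v incompatible with a and with all c n,
   n \<ge> N, Scott open; for suitable N it contains b, hence c n for large n -- absurd, as
   c n \<in> C is compatible with itself. *)

lemma istopology_scott_open: "istopology (scott_open :: 'a::order set \<Rightarrow> bool)"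
  unfolding istopology_def
proof (intro conjI allI impI)
  fix S T :: "'a set"
  assume S: "scott_open S" and T: "scott_open T"
  show "scott_open (S \<inter> T)"
    unfolding scott_open_def
  proof (intro conjI allI impI)
    fix x y assume "x \<in> S \<inter> T \<and> x \<le> y"
    then show "y \<in> S \<inter> T" using S T unfolding scott_open_def by blast
  next
    fix D s assume D: "directed D \<and> is_sup D s \<and> s \<in> S \<inter> T"
    then obtain x y where "x \<in> D \<inter> S" "y \<in> D \<inter> T" using S T unfolding scott_open_def by blast
    then obtain z where "z \<in> D" "x \<le> z" "y \<le> z" using D unfolding directed_def by blast
    then show "D \<inter> (S \<inter> T) \<noteq> {}"
      using S T \<open>x \<in> D \<inter> S\<close> \<open>y \<in> D \<inter> T\<close> unfolding scott_open_def by blast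
  qed
next
  fix K :: "'a set set"
  assume K: "\<forall>S\<in>K. scott_open S"
  show "scott_open (\<Union>K)"
    unfolding scott_open_def
  proof (intro conjI allI impI)
    fix x y assume "x \<in> \<Union>K \<and> x \<le> y"
    then show "y \<in> \<Union>K" using K unfolding scott_open_def by blast
  next
    fix D s assume D: "directed D \<and> is_sup D s \<and> s \<in> \<Union>K"
    then obtain S where "S \<in> K" "s \<in> S" by blast
    then have "D \<inter> S \<noteq> {}" using D K unfolding scott_open_def by blast
    then show "D \<inter> \<Union>K \<noteq> {}" using \<open>S \<in> K\<close> by blast
  qed
qed

lemma openin_scott_topology: "openin scott_topology = scott_open"
  by (simp add: scott_topology_def istopology_scott_open)

lemma topspace_scott_topology [simp]: "topspace (scott_topology :: 'a::order topology) = UNIV"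
proof -
  have "scott_open (UNIV :: 'a set)"
    unfolding scott_open_def directed_def by auto
  then show ?thesis
    unfolding topspace_def openin_scott_topology by blast
qed

lemma closedin_scott_topology: "closedin scott_topology C \<longleftrightarrow> scott_open (- C)"
  by (simp add: closedin_def openin_scott_topology Compl_eq_Diff_UNIV)

lemma scott_closed_down:
  "closedin scott_topology C \<Longrightarrow> x \<in> C \<Longrightarrow> y \<le> x \<Longrightarrow> y \<in> C"
  unfolding closedin_scott_topology scott_open_def by blast

lemma scott_closed_directed_sup:
  "closedin scott_topology C \<Longrightarrow> directed D \<Longrightarrow> D \<subseteq> C \<Longrightarrow> is_sup D s \<Longrightarrow> s \<in> C"
  unfolding closedin_scott_topology scott_open_def by blast

lemma scott_closed_atMost: "closedin scott_topology {..x}"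
  unfolding closedin_scott_topology scott_open_def is_sup_def
  by (auto dest: order_trans)

lemma scott_closure_of_singleton: "scott_topology closure_of {x} = {..x}"
  by (rule closure_of_unique) (auto intro: scott_closed_atMost scott_closed_down)

lemma t0_space_scott_topology: "t0_space scott_topology"
  unfolding t0_space_closure_of_sing scott_closure_of_singleton
  by (metis atMost_iff order_antisym order_refl)

lemma directed_finite_subset_ub:
  assumes "directed D" "finite F" "F \<subseteq> D"
  shows "\<exists>e\<in>D. \<forall>x\<in>F. x \<le> e"
  using assms(2,3)
proof (induction F rule: finite_induct)
  case empty
  then show ?case using assms(1) unfolding directed_def by blast
next
  case (insert x F)
  then obtain e where "e \<in> D" "\<forall>y\<in>F. y \<le> e" by blast
  moreover obtain z where "z \<in> D" "x \<le> z" "e \<le> z"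
    using assms(1) \<open>e \<in> D\<close> insert.prems unfolding directed_def by blast
  ultimately show ?case using order_trans by blast
qed

lemma is_sup_pair_mono:
  "is_sup {u, e} j \<Longrightarrow> is_sup {u, e'} j' \<Longrightarrow> e \<le> e' \<Longrightarrow> j \<le> j'"
  unfolding is_sup_def by (auto dest: order_trans)

lemma directed_image_mono:
  assumes "directed D" "\<And>x y. x \<in> D \<Longrightarrow> y \<in> D \<Longrightarrow> x \<le> y \<Longrightarrow> f x \<le> f y"
  shows "directed (f ` D)"
  unfolding directed_def
proof (intro conjI ballI)
  show "f ` D \<noteq> {}" using assms(1) unfolding directed_def by blast
next
  fix x y assume "x \<in> f ` D" "y \<in> f ` D"
  then obtain a b where ab: "a \<in> D" "b \<in> D" "x = f a" "y = f b" by blast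
  then obtain z where "z \<in> D" "a \<le> z" "b \<le> z" using assms(1) unfolding directed_def by blast
  then show "\<exists>z\<in>f ` D. x \<le> z \<and> y \<le> z" using assms(2) ab by blast
qed

definition incompatible_in :: "'a::order set \<Rightarrow> 'a \<Rightarrow> 'a \<Rightarrow> bool" where
  "incompatible_in C u v \<longleftrightarrow> \<not> (\<exists>c\<in>C. u \<le> c \<and> v \<le> c)"

lemma incompatible_in_commute: "incompatible_in C u v \<longleftrightarrow> incompatible_in C v u"
  unfolding incompatible_in_def by blast

lemma incompatible_in_mono: "incompatible_in C u v \<Longrightarrow> v \<le> v' \<Longrightarrow> incompatible_in C u v'"
  unfolding incompatible_in_def using order_trans by blast

lemma scott_open_incompatible_in:
  assumes dcpo: "dcpo TYPE('a::order)" and bc: "bounded_complete TYPE('a)"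
    and C: "closedin scott_topology (C :: 'a set)"
  shows "scott_open {v. incompatible_in C u v}"
  unfolding scott_open_def
proof (intro conjI allI impI)
  fix x y assume "x \<in> {v. incompatible_in C u v} \<and> x \<le> y"
  then show "y \<in> {v. incompatible_in C u v}" using incompatible_in_mono by blast
next
  fix D s assume D: "directed D \<and> is_sup D s \<and> s \<in> {v. incompatible_in C u v}"
  show "D \<inter> {v. incompatible_in C u v} \<noteq> {}"
  proof
    assume compatible: "D \<inter> {v. incompatible_in C u v} = {}"
    have "\<exists>j. j \<in> C \<and> is_sup {u, e} j" if "e \<in> D" for e
    proof -
      obtain c where c: "c \<in> C" "u \<le> c" "e \<le> c"
        using \<open>e \<in> D\<close> compatible unfolding incompatible_in_def by blast
      then obtain j where "is_sup {u, e} j" using bc unfolding bounded_complete_def by blast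
      moreover have "j \<le> c" using c calculation unfolding is_sup_def by blast
      ultimately show ?thesis using scott_closed_down[OF C c(1)] by blast
    qed
    then obtain j where j: "\<And>e. e \<in> D \<Longrightarrow> j e \<in> C \<and> is_sup {u, e} (j e)" by metis
    have "directed (j ` D)"
      by (rule directed_image_mono) (use D j is_sup_pair_mono in blast)+
    then obtain t where t: "is_sup (j ` D) t" using dcpo unfolding dcpo_def by blast
    have "t \<in> C" using scott_closed_directed_sup[OF C \<open>directed (j ` D)\<close> _ t] j by blast
    have "u \<le> t \<and> e \<le> t" if "e \<in> D" for e
      using j[OF that] t that unfolding is_sup_def by (blast intro: order_trans)
    moreover obtain e0 where "e0 \<in> D" using D unfolding directed_def by blast
    ultimately have "u \<le> t" "s \<le> t" using D unfolding is_sup_def by blast+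
    then show False using D \<open>t \<in> C\<close> unfolding incompatible_in_def by blast
  qed
qed

lemma scott_closed_directed_eq_closure_of_sup:
  assumes "closedin scott_topology C" "directed C" "is_sup C s"
  shows "C = scott_topology closure_of {s}"
proof -
  have "s \<in> C" using scott_closed_directed_sup assms by blast
  then show ?thesis
    using assms scott_closed_down unfolding scott_closure_of_singleton is_sup_def by auto
qed

lemma scott_open_tail_Inter:
  fixes R :: "'a::order \<Rightarrow> 'a \<Rightarrow> bool" and c :: "nat \<Rightarrow> 'a"
  assumes open_right: "\<And>u. scott_open {v. R u v}"
    and open_left: "\<And>v. scott_open {u. R u v}"
    and lim: "limitin scott_topology c a sequentially"
  shows "scott_open {v. R a v \<and> (\<forall>n\<ge>N. R (c n) v)}"
  unfolding scott_open_def
proof (intro conjI allI impI)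
  fix x y assume "x \<in> {v. R a v \<and> (\<forall>n\<ge>N. R (c n) v)} \<and> x \<le> y"
  then show "y \<in> {v. R a v \<and> (\<forall>n\<ge>N. R (c n) v)}"
    using open_right unfolding scott_open_def by blast
next
  fix D d assume D: "directed D \<and> is_sup D d \<and> d \<in> {v. R a v \<and> (\<forall>n\<ge>N. R (c n) v)}"
  then obtain e0 where e0: "e0 \<in> D" "R a e0"
    using open_right[of a] unfolding scott_open_def by blast
  txt \<open>Since \<open>c\<close> converges to \<open>a\<close>, the element \<open>e0\<close> already satisfies all but
    finitely many of the constraints \<open>R (c n)\<close>; directedness of \<open>D\<close> takes care of the rest.\<close>
  obtain N0 where N0: "\<And>n. n \<ge> N0 \<Longrightarrow> R (c n) e0"
    using lim e0(2) open_left[of e0] unfolding limitin_sequentially openin_scott_topology by blast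
  have "\<exists>e\<in>D. R (c n) e" if "n \<ge> N" for n
    using D open_right[of "c n"] that unfolding scott_open_def by blast
  then obtain f where f: "\<And>n. n \<ge> N \<Longrightarrow> f n \<in> D \<and> R (c n) (f n)" by metis
  have "finite (insert e0 (f ` {N..<N0}))" "insert e0 (f ` {N..<N0}) \<subseteq> D"
    using e0 f by auto
  then obtain e where e: "e \<in> D" "\<forall>x\<in>insert e0 (f ` {N..<N0}). x \<le> e"
    using directed_finite_subset_ub D by blast
  have up: "R u v \<Longrightarrow> v \<le> v' \<Longrightarrow> R u v'" for u v v'
    using open_right[of u] unfolding scott_open_def by blast
  have "R (c n) e" if "n \<ge> N" for n
  proof (cases "n < N0")
    case True
    then have "f n \<le> e" using e that by simp
    then show ?thesis using up f[OF that] by blast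
  next
    case False
    then have "R (c n) e0" using N0 by simp
    then show ?thesis using up e by simp
  qed
  with e e0 up have "e \<in> {v. R a v \<and> (\<forall>n\<ge>N. R (c n) v)}" by blast
  then show "D \<inter> {v. R a v \<and> (\<forall>n\<ge>N. R (c n) v)} \<noteq> {}" using e by blast
qed

lemma irreducible_in_imp_in_closure_of_diagonal:
  assumes C: "irreducible_in X C" and "a \<in> C" "b \<in> C"
  shows "(a, b) \<in> prod_topology X X closure_of ((\<lambda>c. (c, c)) ` C)"
  unfolding in_closure_of
proof (intro conjI allI impI)
  show "(a, b) \<in> topspace (prod_topology X X)"
    using C \<open>a \<in> C\<close> \<open>b \<in> C\<close> unfolding irreducible_in_def by auto
next
  fix T assume "(a, b) \<in> T \<and> openin (prod_topology X X) T"
  then obtain U V where UV: "openin X U" "openin X V" "a \<in> U" "b \<in> V" "U \<times> V \<subseteq> T"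
    unfolding openin_prod_topology_alt by blast
  have "C \<inter> U \<inter> V \<noteq> {}"
  proof
    assume "C \<inter> U \<inter> V = {}"
    then have "C \<subseteq> (topspace X - U) \<union> (topspace X - V)"
      using C unfolding irreducible_in_def by blast
    then have "C \<subseteq> topspace X - U \<or> C \<subseteq> topspace X - V"
      using C UV unfolding irreducible_in_def by blast
    then show False using UV \<open>a \<in> C\<close> \<open>b \<in> C\<close> by blast
  qed
  then show "\<exists>y. y \<in> (\<lambda>c. (c, c)) ` C \<and> y \<in> T" using UV by blast
qed

lemma irreducible_scott_closed_directed:
  fixes C :: "'a::order set"
  assumes dcpo: "dcpo TYPE('a)" and bc: "bounded_complete TYPE('a)"
    and frechet: "frechet_space (prod_topology (scott_topology :: 'a topology) (scott_topology :: 'a topology))"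
    and closed: "closedin scott_topology C" and irr: "irreducible_in scott_topology C"
  shows "directed C"
proof -
  have open_right: "scott_open {v. incompatible_in C u v}" for u
    using scott_open_incompatible_in[OF dcpo bc closed] .
  have open_left: "scott_open {u. incompatible_in C u v}" for v
  proof -
    have "{u. incompatible_in C u v} = {u. incompatible_in C v u}"
      using incompatible_in_commute by blast
    then show ?thesis using open_right[of v] by simp
  qed
  have "\<not> incompatible_in C a b" if "a \<in> C" "b \<in> C" for a b
  proof
    assume ab: "incompatible_in C a b"
    have "\<exists>\<sigma>. (\<forall>n. \<sigma> n \<in> (\<lambda>c. (c, c)) ` C) \<and>
        limitin (prod_topology scott_topology scott_topology) \<sigma> (a, b) sequentially"
      using irreducible_in_imp_in_closure_of_diagonal[OF irr \<open>a \<in> C\<close> \<open>b \<in> C\<close>]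
      by (intro frechet[unfolded frechet_space_def, rule_format]) simp
    then obtain \<sigma> where \<sigma>: "\<And>n. \<sigma> n \<in> (\<lambda>c. (c, c)) ` C"
      and lim: "limitin (prod_topology scott_topology scott_topology) \<sigma> (a, b) sequentially"
      by blast
    define c where "c n = fst (\<sigma> n)" for n
    have "c n \<in> C" "\<sigma> n = (c n, c n)" for n
      using \<sigma>[of n] unfolding c_def by auto
    then have "fst \<circ> \<sigma> = c" "snd \<circ> \<sigma> = c" by auto
    then have ca: "limitin scott_topology c a sequentially"
      and cb: "limitin scott_topology c b sequentially"
      using lim unfolding limitin_pairwise by auto
    obtain N where N: "\<And>n. n \<ge> N \<Longrightarrow> incompatible_in C (c n) b"
      using ca ab open_left[of b] unfolding limitin_sequentially openin_scott_topology by blast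
    let ?V = "{v. incompatible_in C a v \<and> (\<forall>n\<ge>N. incompatible_in C (c n) v)}"
    have "scott_open ?V"
      using scott_open_tail_Inter[OF open_right open_left ca] .
    moreover have "b \<in> ?V" using ab N by blast
    ultimately obtain N1 where "\<And>n. n \<ge> N1 \<Longrightarrow> c n \<in> ?V"
      using cb unfolding limitin_sequentially openin_scott_topology by blast
    then have "incompatible_in C (c (max N N1)) (c (max N N1))" by simp
    then show False using \<open>c (max N N1) \<in> C\<close> unfolding incompatible_in_def by blast
  qed
  moreover have "C \<noteq> {}" using irr unfolding irreducible_in_def by blast
  ultimately show ?thesis unfolding directed_def incompatible_in_def by blast
qed

theorem corollary3p8:
  assumes "dcpo TYPE('a::order)"
    and "bounded_complete TYPE('a)"
    and "frechet_space (prod_topology (scott_topology :: 'a topology) (scott_topology :: 'a topology))"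
  shows "sober_space (scott_topology :: 'a topology)"
proof -
  have "\<exists>s. C = scott_topology closure_of {s}"
    if "closedin scott_topology C" "irreducible_in scott_topology C" for C :: "'a set"
  proof -
    have "directed C" using irreducible_scott_closed_directed assms that .
    then obtain s where "is_sup C s" using assms(1) unfolding dcpo_def by blast
    then show ?thesis
      using scott_closed_directed_eq_closure_of_sup \<open>directed C\<close> that(1) by blast
  qed
  then show ?thesis
    unfolding sober_space_def using t0_space_scott_topology by auto
qed

end
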